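(* Let $n\ge 3$ and let $\mathcal{A}$ be an arrangement of $(n-2)$-planes in $\mathbb{P}^n$ whose incidence graph $\Gamma(\mathcal{A})$ is isomorphic to the complete bipartite graph $K_{a,b}$, where $a,b$ are positive integers with $a\le b\le 2$ or $2\le a\le b$. Then $\mathcal{A}$ is a cone over an arrangement $\mathcal{B}$ of lines in $\mathbb{P}^3$ with $\Gamma(\mathcal{B})\cong K_{a,b}$; that is, there exist an $(n-4)$-dimensional linear subspace $V\subset\mathbb{P}^n$, a $3$-dimensional linear subspace $\Lambda\subset\mathbb{P}^n$ with $V\cap\Lambda=\emptyset$ (so $\Lambda\cong\mathbb{P}^3$), and an arrangement $\mathcal{B}$ of lines in $\Lambda$ with $\Gamma(\mathcal{B})\cong K_{a,b}$, such that $\mathcal{A}=\{\operatorname{span}(V\cup \ell) : \ell\in\mathcal{B}\}$.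
   Context: A subspace arrangement is a finite collection of linear subspaces of a projective space with no inclusions among distinct members. The incidence graph $\Gamma(\mathcal{A})$ has vertex set $\mathcal{A}$ and an edge between $X\ne Y$ iff $\dim(X\cap Y)$ exceeds the expected dimension, which for two $(n-2)$-planes in $\mathbb{P}^n$ is $n-4$ (the empty set has dimension $-1$; so for lines in $\mathbb{P}^3$ an edge means the two lines meet). $K_{a,b}$ is the complete bipartite graph with parts of sizes $a$ and $b$. For $n=3$, $V$ is empty. *)

theory Defs
  imports Complex_Main
begin

text \<open>Projective space P^n over the complex numbers is modelled via the vector space
  C^(n+1), realised as the functions nat => complex vanishing at every index > n.
  A projective linear subspace of projective dimension p corresponds to a complex
  linear subspace of vector dimension p+1 (the empty subspace is the zero subspace).\<close>

definition amb :: "nat \<Rightarrow> (nat \<Rightarrow> complex) set" where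
  "amb n = {v. \<forall>i>n. v i = 0}"

definition cspan :: "(nat \<Rightarrow> complex) set \<Rightarrow> (nat \<Rightarrow> complex) set" where
  "cspan S = {v. \<exists>F c. finite F \<and> F \<subseteq> S \<and> v = (\<lambda>i. \<Sum>x\<in>F. c x * x i)}"

definition cindep :: "(nat \<Rightarrow> complex) set \<Rightarrow> bool" where
  "cindep S \<longleftrightarrow> (\<forall>F c. finite F \<and> F \<subseteq> S \<and> (\<forall>i. (\<Sum>x\<in>F. c x * x i) = 0)
                    \<longrightarrow> (\<forall>x\<in>F. c x = 0))"

definition has_vdim :: "(nat \<Rightarrow> complex) set \<Rightarrow> nat \<Rightarrow> bool" where
  "has_vdim W d \<longleftrightarrow> (\<exists>B. finite B \<and> cindep B \<and> cspan B = W \<and> card B = d)"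

definition arrangement :: "(nat \<Rightarrow> complex) set \<Rightarrow> nat \<Rightarrow> (nat \<Rightarrow> complex) set set \<Rightarrow> bool" where
  "arrangement M d A \<longleftrightarrow> finite A \<and> (\<forall>X\<in>A. X \<subseteq> M \<and> has_vdim X d)
     \<and> (\<forall>X\<in>A. \<forall>Y\<in>A. X \<noteq> Y \<longrightarrow> \<not> X \<subseteq> Y)"

definition iso_Kab :: "'v set \<Rightarrow> ('v \<Rightarrow> 'v \<Rightarrow> bool) \<Rightarrow> nat \<Rightarrow> nat \<Rightarrow> bool" where
  "iso_Kab A E a b \<longleftrightarrow> (\<exists>P Q. P \<inter> Q = {} \<and> P \<union> Q = A \<and> finite P \<and> finite Q
      \<and> card P = a \<and> card Q = b
      \<and> (\<forall>X\<in>A. \<forall>Y\<in>A. X \<noteq> Y \<longrightarrow> (E X Y \<longleftrightarrow> (X \<in> P \<and> Y \<in> Q) \<or> (X \<in> Q \<and> Y \<in> P))))"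

text \<open>Incidence edge for two (n-2)-planes in P^n: projective dimension of the
  intersection exceeds n-4, i.e. vector dimension exceeds n-3.\<close>
definition edge_codim2 :: "nat \<Rightarrow> (nat \<Rightarrow> complex) set \<Rightarrow> (nat \<Rightarrow> complex) set \<Rightarrow> bool" where
  "edge_codim2 n X Y \<longleftrightarrow> (\<exists>d. has_vdim (X \<inter> Y) d \<and> d > n - 3)"

text \<open>Incidence edge for two lines in P^3: they meet (projective dimension of the
  intersection exceeds -1, i.e. vector dimension exceeds 0).\<close>
definition edge_lines :: "(nat \<Rightarrow> complex) set \<Rightarrow> (nat \<Rightarrow> complex) set \<Rightarrow> bool" where
  "edge_lines X Y \<longleftrightarrow> (\<exists>d. has_vdim (X \<inter> Y) d \<and> d > 0)"

end

theory Submission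
  imports Defs "HOL-Library.Function_Algebras"
begin

(*
  Two distinct members Y1, Y2 of the same part of K_{a,b} are not incident, so V = Y1 \<inter> Y2 is an
  (n-4)-plane.  If X meets both Y1 and Y2 in (n-3)-planes, then these two (n-3)-planes of the
  (n-2)-plane X intersect in dimension at least n-4, while their intersection lies in V;
  hence V \<subseteq> X.  So V lies in every member of the other part, and, using two members of that
  part in the same way (or, when it has only one member, the fact that the first part is
  {Y1, Y2}), in every member of A.  For a = b = 1 any (n-4)-plane inside the intersection of the
  two members will do.

  Given such a common V, choose a 3-plane \<Lambda> complementary to V.  By the modular law every X \<in> A
  equals span (V \<union> (X \<inter> \<Lambda>)), and slicing with \<Lambda> lowers the dimension of every
  intersection X \<inter> Y \<supseteq> V by exactly n-3.  Hence X \<mapsto> X \<inter> \<Lambda> maps A bijectively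
  onto an arrangement of lines in \<Lambda> with the same incidence graph.
*)

context module
begin

lemma span_Int_span_of_disjoint_subsets:
  assumes "independent C" "A \<subseteq> C" "B \<subseteq> C" "A \<inter> B = {}"
  shows "span A \<inter> span B = {0}"
proof -
  have "x = 0" if "x \<in> span A" "x \<in> span B" for x
  proof -
    have "representation C x = representation A x" "representation C x = representation B x"
      using representation_extend[OF assms(1) that(1) assms(2)]
        representation_extend[OF assms(1) that(2) assms(3)] by simp_all
    then have rep_zero: "representation C x b = 0" for b
      using representation_ne_zero[of A x b] representation_ne_zero[of B x b] assms(4) by auto
    have "x \<in> span C"
      using that(1) assms(2) span_mono by blast
    then show "x = 0"
      using sum_nonzero_representation_eq[OF assms(1), of x] by (simp add: rep_zero)
  qed
  then show ?thesis
    using span_zero by blast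
qed

lemma independent_Un_of_span_Int_zero:
  assumes "independent A" "independent B" "span A \<inter> span B = {0}"
  shows "independent (A \<union> B)"
  unfolding independent_explicit_module
proof (intro allI impI)
  fix t u v
  assume t: "finite t" "t \<subseteq> A \<union> B" and sum_zero: "(\<Sum>v\<in>t. u v *s v) = 0" and v: "v \<in> t"
  define a where "a = (\<Sum>w\<in>t \<inter> A. u w *s w)"
  define b where "b = (\<Sum>w\<in>t - A. u w *s w)"
  have "a + b = 0"
    using sum_zero sum.Int_Diff[OF t(1)] unfolding a_def b_def by metis
  moreover have "a \<in> span A"
    unfolding a_def by (intro span_sum span_scale span_base) auto
  moreover have "b \<in> span B"
    unfolding b_def using t(2) by (intro span_sum span_scale span_base) auto
  ultimately have "a \<in> span A \<inter> span B"
    using span_neg[of b B] by (simp add: add_eq_0_iff)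
  then have "a = 0" "b = 0"
    using assms(3) \<open>a + b = 0\<close> by auto
  moreover have "finite (t \<inter> A)" "t \<inter> A \<subseteq> A" "finite (t - A)" "t - A \<subseteq> B"
    using t by auto
  ultimately show "u v = 0"
    using independentD[OF assms(1), of "t \<inter> A" u v] independentD[OF assms(2), of "t - A" u v] v
    unfolding a_def b_def by blast
qed

lemma span_Un_Int_eq:
  assumes "subspace V" "subspace L" "subspace X" "V \<subseteq> X" "X \<subseteq> span (V \<union> L)"
  shows "span (V \<union> (X \<inter> L)) = X"
proof
  show "span (V \<union> (X \<inter> L)) \<subseteq> X"
    using assms by (intro span_minimal) auto
  show "X \<subseteq> span (V \<union> (X \<inter> L))"
  proof
    fix x assume "x \<in> X"
    then obtain v l where x: "x = v + l" and "v \<in> span V" "l \<in> span L"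
      using assms(5) span_Un[of V L] by blast
    then have v: "v \<in> V" and l: "l \<in> L"
      using span_minimal[OF order_refl] assms(1,2) by blast+
    have "l = x - v" using x by simp
    then have "l \<in> X \<inter> L"
      using \<open>x \<in> X\<close> v l assms(3,4) subspace_diff by blast
    then have "v \<in> span (V \<union> (X \<inter> L))" "l \<in> span (V \<union> (X \<inter> L))"
      using v by (auto intro: span_base)
    then show "x \<in> span (V \<union> (X \<inter> L))"
      using x span_add by simp
  qed
qed

end

text \<open>The vector space of all complex sequences is infinite-dimensional; finite dimensionality
  of the subspaces involved is expressed by the hypotheses \<open>S \<subseteq> span F\<close> with \<open>finite F\<close>.\<close>

context vector_space
begin

lemma complement_subspace_exists:
  assumes "subspace V" "subspace U" "V \<subseteq> U"
  obtains L where "subspace L" "L \<subseteq> U" "V \<inter> L = {0}" "span (V \<union> L) = U"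
proof -
  obtain B where B: "B \<subseteq> V" "independent B" "V \<subseteq> span B"
    using basis_exists[of V] by metis
  have "B \<subseteq> U"
    using B(1) assms(3) by (rule order_trans)
  then obtain C where C: "B \<subseteq> C" "C \<subseteq> U" "independent C" "U \<subseteq> span C"
    using maximal_independent_subset_extend[OF _ B(2)] by metis
  define L where "L = span (C - B)"
  have "span B = V"
    using span_subspace[OF B(1,3) assms(1)] .
  then have "V \<inter> L = {0}"
    unfolding L_def using span_Int_span_of_disjoint_subsets[OF C(3) C(1), of "C - B"] by blast
  moreover have "L \<subseteq> U"
    unfolding L_def using span_minimal[OF _ assms(2), of "C - B"] C(2) by blast
  moreover have "span (V \<union> L) = U"
  proof (rule span_subspace)
    show "V \<union> L \<subseteq> U"
      using assms(3) \<open>L \<subseteq> U\<close> by blast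
    have "C \<subseteq> V \<union> L"
      unfolding L_def using B(1) span_superset[of "C - B"] by blast
    then show "U \<subseteq> span (V \<union> L)"
      using C(4) span_mono[of C "V \<union> L"] by blast
  qed (fact assms(2))
  ultimately show thesis
    using that[of L] unfolding L_def by simp
qed

lemma finite_basis_of_subspace:
  assumes "subspace S" "S \<subseteq> span F" "finite F"
  obtains B where "finite B" "independent B" "span B = S" "card B = dim S"
proof -
  obtain B where B: "B \<subseteq> S" "independent B" "S \<subseteq> span B" "card B = dim S"
    using basis_exists by blast
  then show thesis
    using that independent_span_bound[OF assms(3) B(2)] assms span_subspace by blast
qed

lemma dim_subset_fin_span:
  assumes "S \<subseteq> T" "subspace T" "T \<subseteq> span F" "finite F"
  shows "dim S \<le> dim T"
proof -
  obtain B where "finite B" "span B = T" "card B = dim T"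
    using finite_basis_of_subspace assms(2-4) by metis
  then show ?thesis
    using dim_le_card[of S B] assms(1) by simp
qed

lemma subspace_dim_equal_fin_span:
  assumes "subspace S" "subspace T" "S \<subseteq> T" "T \<subseteq> span F" "finite F" "dim T \<le> dim S"
  shows "S = T"
proof (rule ccontr)
  assume "S \<noteq> T"
  then obtain t where t: "t \<in> T" "t \<notin> S"
    using assms(3) by blast
  obtain B where B: "finite B" "independent B" "span B = S" "card B = dim S"
    using finite_basis_of_subspace assms(1,3-5) by (metis order_trans)
  have "t \<notin> B"
    using t(2) B(3) span_superset by blast
  have "independent (insert t B)"
    using independent_insertI t(2) B by simp
  then have "Suc (dim S) = dim (insert t B)"
    using B \<open>t \<notin> B\<close> by (simp add: dim_eq_card_independent)
  also have "\<dots> \<le> dim T"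
    using t(1) B(3) assms span_superset by (intro dim_subset_fin_span[of _ T F]) auto
  finally show False
    using assms(6) by simp
qed

lemma dim_direct_sum:
  assumes "subspace S" "subspace T" "S \<inter> T = {0}" "S \<subseteq> span F" "T \<subseteq> span F" "finite F"
  shows "dim (span (S \<union> T)) = dim S + dim T"
proof -
  obtain B where B: "finite B" "independent B" "span B = S" "card B = dim S"
    using finite_basis_of_subspace assms(1,4,6) by metis
  obtain C where C: "finite C" "independent C" "span C = T" "card C = dim T"
    using finite_basis_of_subspace assms(2,5,6) by metis
  have "B \<subseteq> S" "C \<subseteq> T"
    using span_superset[of B] span_superset[of C] unfolding B(3) C(3) by simp_all
  moreover have "0 \<notin> B"
    using B(2) dependent_zero by blast
  moreover have "B \<inter> C \<subseteq> {0}"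
    using Int_mono[OF \<open>B \<subseteq> S\<close> \<open>C \<subseteq> T\<close>] unfolding assms(3) .
  ultimately have "B \<inter> C = {}"
    by blast
  moreover have "independent (B \<union> C)"
    using independent_Un_of_span_Int_zero[OF B(2) C(2)] assms(3) unfolding B(3) C(3) .
  moreover have "span (B \<union> C) = span (S \<union> T)"
    using \<open>B \<subseteq> S\<close> \<open>C \<subseteq> T\<close> span_mono[of "B \<union> C" "S \<union> T"] span_mono[of B "B \<union> C"]
      span_mono[of C "B \<union> C"] unfolding B(3) C(3) span_eq by blast
  ultimately show ?thesis
    using B(1,4) C(1,4) card_Un_disjoint dim_span_eq_card_independent by metis
qed

text \<open>Grassmann's formula, obtained by splitting \<open>T = (S \<inter> T) \<oplus> L\<close>, so that \<open>S + T = S \<oplus> L\<close>.\<close>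

lemma dim_sums_Int_fin_span:
  assumes "subspace S" "subspace T" "S \<subseteq> span F" "T \<subseteq> span F" "finite F"
  shows "dim (span (S \<union> T)) + dim (S \<inter> T) = dim S + dim T"
proof -
  have ST: "subspace (S \<inter> T)" "S \<inter> T \<subseteq> span F"
    using subspace_inter[OF assms(1,2)] assms(3) by blast+
  obtain L where L: "subspace L" "L \<subseteq> T" "(S \<inter> T) \<inter> L = {0}" "span ((S \<inter> T) \<union> L) = T"
    using complement_subspace_exists[OF ST(1) assms(2)] by blast
  have "L \<subseteq> span F"
    using L(2) assms(4) by (rule order_trans)
  have "S \<inter> L = (S \<inter> T) \<inter> L"
    using L(2) by blast
  then have "S \<inter> L = {0}"
    using L(3) by simp
  have "span (S \<union> T) = span (S \<union> L)"
  proof -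
    have "T \<subseteq> span (S \<union> L)"
      using L(4) span_mono[of "(S \<inter> T) \<union> L" "S \<union> L"] by blast
    then have "S \<union> T \<subseteq> span (S \<union> L)"
      using span_superset[of "S \<union> L"] by blast
    moreover have "S \<union> L \<subseteq> span (S \<union> T)"
      using L(2) span_superset[of "S \<union> T"] by blast
    ultimately show ?thesis
      using span_eq by blast
  qed
  moreover have "dim (span (S \<union> L)) = dim S + dim L"
    using dim_direct_sum[OF assms(1) L(1) \<open>S \<inter> L = {0}\<close> assms(3) \<open>L \<subseteq> span F\<close> assms(5)] .
  moreover have "dim T = dim (S \<inter> T) + dim L"
    using dim_direct_sum[OF ST(1) L(1,3) ST(2) \<open>L \<subseteq> span F\<close> assms(5)] unfolding L(4) .
  ultimately show ?thesis
    by simp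
qed

lemma dim_Int_complement:
  assumes "subspace V" "subspace L" "V \<inter> L = {0}"
    and "subspace W" "V \<subseteq> W" "W \<subseteq> span (V \<union> L)" "W \<subseteq> span F" "finite F"
  shows "dim (W \<inter> L) + dim V = dim W"
proof -
  have "V \<inter> (W \<inter> L) = V \<inter> L"
    using assms(5) by blast
  then have "V \<inter> (W \<inter> L) = {0}"
    using assms(3) by simp
  moreover have "V \<subseteq> span F" "W \<inter> L \<subseteq> span F"
    using assms(5,7) by blast+
  ultimately have "dim (span (V \<union> (W \<inter> L))) = dim V + dim (W \<inter> L)"
    using dim_direct_sum[OF assms(1) subspace_inter[OF assms(4,2)]] assms(8) by blast
  then show ?thesis
    using span_Un_Int_eq[OF assms(1,2,4,5,6)] by simp
qed

lemma subspace_of_dim_exists: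
  assumes "subspace S" "S \<subseteq> span F" "finite F" "k \<le> dim S"
  obtains V where "subspace V" "V \<subseteq> S" "dim V = k"
proof -
  obtain B where B: "finite B" "independent B" "span B = S" "card B = dim S"
    using finite_basis_of_subspace assms(1-3) by metis
  then obtain C where C: "C \<subseteq> B" "card C = k"
    using obtain_subset_with_card_n[of k B] assms(4) by metis
  show thesis
  proof
    show "span C \<subseteq> S"
      using C(1) B(3) span_mono by blast
    show "dim (span C) = k"
      using C independent_mono[OF B(2) C(1)] dim_span_eq_card_independent by simp
  qed simp
qed

lemma Int_subset_if_dim_Int_large:
  assumes "subspace X1" "subspace X2" "subspace Y"
    and "X1 \<subseteq> span F" "X2 \<subseteq> span F" "Y \<subseteq> span F" "finite F"
    and "dim Y + dim (X1 \<inter> X2) \<le> dim (Y \<inter> X1) + dim (Y \<inter> X2)"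
  shows "X1 \<inter> X2 \<subseteq> Y"
proof -
  let ?S1 = "Y \<inter> X1" and ?S2 = "Y \<inter> X2"
  have S: "subspace ?S1" "subspace ?S2" "subspace (?S1 \<inter> ?S2)" "subspace (X1 \<inter> X2)"
    using assms(1-3) subspace_inter by blast+
  have "dim (span (?S1 \<union> ?S2)) + dim (?S1 \<inter> ?S2) = dim ?S1 + dim ?S2"
    using dim_sums_Int_fin_span[of ?S1 ?S2 F] S assms(6,7) by blast
  moreover have "dim (span (?S1 \<union> ?S2)) \<le> dim Y"
    using assms(3,6,7) span_minimal[of "?S1 \<union> ?S2" Y] by (intro dim_subset_fin_span) auto
  ultimately have "dim (X1 \<inter> X2) \<le> dim (?S1 \<inter> ?S2)"
    using assms(8) by linarith
  then have "?S1 \<inter> ?S2 = X1 \<inter> X2"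
    using S assms(4,7) by (intro subspace_dim_equal_fin_span[of _ _ F]) auto
  then show ?thesis
    by blast
qed

end

definition cscale :: "complex \<Rightarrow> (nat \<Rightarrow> complex) \<Rightarrow> nat \<Rightarrow> complex" where
  "cscale c v = (\<lambda>i. c * v i)"

interpretation vs: vector_space cscale
  by unfold_locales (auto simp: cscale_def fun_eq_iff algebra_simps)

lemma sum_apply: "(\<Sum>x\<in>F. f x) i = (\<Sum>x\<in>F. f x i :: 'a :: comm_monoid_add)"
  by (induct F rule: infinite_finite_induct) auto

lemma cspan_eq_span: "cspan S = vs.span S"
  unfolding cspan_def vs.span_explicit by (auto simp: sum_apply cscale_def fun_eq_iff)

lemma cindep_iff_independent: "cindep S \<longleftrightarrow> vs.independent S"
  unfolding cindep_def vs.independent_explicit_module by (auto simp: sum_apply cscale_def fun_eq_iff)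

lemma has_vdimD:
  assumes "has_vdim S d"
  shows "vs.subspace S" "vs.dim S = d"
  using assms vs.dim_span_eq_card_independent
  unfolding has_vdim_def cspan_eq_span cindep_iff_independent by auto

definition unit_vec :: "nat \<Rightarrow> nat \<Rightarrow> complex" where
  "unit_vec k = (\<lambda>j. if j = k then 1 else 0)"

lemma subspace_amb: "vs.subspace (amb n)"
  unfolding vs.subspace_def amb_def by (simp add: cscale_def)

lemma span_unit_vecs: "vs.span (unit_vec ` {..n}) = amb n"
proof
  show "vs.span (unit_vec ` {..n}) \<subseteq> amb n"
    using subspace_amb by (intro vs.span_minimal) (auto simp: unit_vec_def amb_def)
  show "amb n \<subseteq> vs.span (unit_vec ` {..n})"
  proof
    fix v assume v: "v \<in> amb n"
    have "(\<Sum>k\<le>n. v k * unit_vec k i) = v i" for i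
    proof -
      have "(\<Sum>k\<le>n. v k * unit_vec k i) = (\<Sum>k\<le>n. if k = i then v k else 0)"
        by (rule sum.cong) (auto simp: unit_vec_def)
      also have "\<dots> = v i"
        using v by (auto simp: amb_def)
      finally show ?thesis .
    qed
    then have "v = (\<Sum>k\<le>n. cscale (v k) (unit_vec k))"
      by (auto simp: fun_eq_iff sum_apply cscale_def)
    also have "\<dots> \<in> vs.span (unit_vec ` {..n})"
      by (intro vs.span_sum vs.span_scale vs.span_base) auto
    finally show "v \<in> vs.span (unit_vec ` {..n})" .
  qed
qed

lemma independent_unit_vecs: "vs.independent (unit_vec ` {..n})"
  unfolding cindep_iff_independent[symmetric] cindep_def
proof (intro allI impI ballI)
  fix F c x
  assume "finite F \<and> F \<subseteq> unit_vec ` {..n} \<and> (\<forall>i. (\<Sum>y\<in>F. c y * y i) = 0)" and "x \<in> F"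
  then have F: "finite F" "F \<subseteq> unit_vec ` {..n}" and sum_zero: "\<And>i. (\<Sum>y\<in>F. c y * y i) = 0"
    by auto
  obtain k where x: "x = unit_vec k"
    using F(2) \<open>x \<in> F\<close> by blast
  have "(\<Sum>y\<in>F - {x}. c y * y k) = 0"
  proof (intro sum.neutral ballI)
    fix y assume "y \<in> F - {x}"
    then obtain j where "y = unit_vec j" "j \<noteq> k"
      using F(2) x by auto
    then show "c y * y k = 0"
      by (simp add: unit_vec_def)
  qed
  then have "(\<Sum>y\<in>F. c y * y k) = c x"
    using F(1) \<open>x \<in> F\<close> by (simp add: sum.remove x unit_vec_def)
  then show "c x = 0"
    using sum_zero by simp
qed

lemma card_unit_vecs: "card (unit_vec ` {..n}) = Suc n"
proof -
  have "inj unit_vec"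
    by (rule injI) (metis unit_vec_def one_neq_zero)
  then show ?thesis
    by (simp add: card_image inj_on_subset)
qed

lemma dim_amb: "vs.dim (amb n) = Suc n"
  using vs.dim_span_eq_card_independent[OF independent_unit_vecs] span_unit_vecs card_unit_vecs
  by metis

lemma has_vdim_iff_dim:
  assumes "vs.subspace S" "S \<subseteq> amb n"
  shows "has_vdim S d \<longleftrightarrow> d = vs.dim S"
proof
  assume "d = vs.dim S"
  moreover obtain B where "finite B" "vs.independent B" "vs.span B = S" "card B = vs.dim S"
    using vs.finite_basis_of_subspace[of S "unit_vec ` {..n}"] assms span_unit_vecs by blast
  ultimately show "has_vdim S d"
    unfolding has_vdim_def cspan_eq_span cindep_iff_independent by blast
qed (use has_vdimD in auto)

lemma edge_codim2_iff_dim: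
  assumes "vs.subspace X" "vs.subspace Y" "X \<subseteq> amb n"
  shows "edge_codim2 n X Y \<longleftrightarrow> n - 3 < vs.dim (X \<inter> Y)"
proof -
  have "X \<inter> Y \<subseteq> amb n"
    using assms(3) by blast
  then show ?thesis
    using has_vdim_iff_dim[OF vs.subspace_inter[OF assms(1,2)]] unfolding edge_codim2_def by simp
qed

lemma edge_lines_iff_dim:
  assumes "vs.subspace X" "vs.subspace Y" "X \<subseteq> amb n"
  shows "edge_lines X Y \<longleftrightarrow> 0 < vs.dim (X \<inter> Y)"
proof -
  have "X \<inter> Y \<subseteq> amb n"
    using assms(3) by blast
  then show ?thesis
    using has_vdim_iff_dim[OF vs.subspace_inter[OF assms(1,2)]] unfolding edge_lines_def by simp
qed

lemma arrangement_memberD: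
  assumes "arrangement M d A" "X \<in> A"
  shows "X \<subseteq> M" "vs.subspace X" "vs.dim X = d"
  using assms has_vdimD unfolding arrangement_def by auto

lemma dim_Int_codim2_ge:
  assumes "vs.subspace X" "vs.subspace Y" "X \<subseteq> amb n" "Y \<subseteq> amb n"
    and "vs.dim X = n - 1" "vs.dim Y = n - 1"
  shows "n - 3 \<le> vs.dim (X \<inter> Y)"
proof -
  have "vs.span (X \<union> Y) \<subseteq> amb n"
    using assms(3,4) by (intro vs.span_minimal subspace_amb) simp
  then have "vs.dim (vs.span (X \<union> Y)) \<le> Suc n"
    using vs.dim_subset_fin_span[OF _ subspace_amb, where F = "unit_vec ` {..n}"]
    by (simp add: span_unit_vecs dim_amb del: vs.dim_span)
  moreover have "vs.dim (vs.span (X \<union> Y)) + vs.dim (X \<inter> Y) = vs.dim X + vs.dim Y"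
    using vs.dim_sums_Int_fin_span[OF assms(1,2), where F = "unit_vec ` {..n}"] assms(3,4) span_unit_vecs
    by simp
  ultimately show ?thesis
    using assms(5,6) by linarith
qed

lemma dim_Int_nonadjacent:
  assumes "arrangement (amb n) (n - 1) A" "X \<in> A" "Y \<in> A" "\<not> edge_codim2 n X Y"
  shows "vs.dim (X \<inter> Y) = n - 3"
  using dim_Int_codim2_ge[of X Y n] edge_codim2_iff_dim[of X Y n]
    arrangement_memberD[OF assms(1,2)] arrangement_memberD[OF assms(1,3)] assms(4)
  by simp

lemma Int_subset_of_common_neighbour:
  assumes "3 \<le> n" "arrangement (amb n) (n - 1) A" "X1 \<in> A" "X2 \<in> A" "Y \<in> A"
    and "\<not> edge_codim2 n X1 X2" "edge_codim2 n Y X1" "edge_codim2 n Y X2"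
  shows "X1 \<inter> X2 \<subseteq> Y"
proof (rule vs.Int_subset_if_dim_Int_large)
  note X1 = arrangement_memberD[OF assms(2,3)]
    and X2 = arrangement_memberD[OF assms(2,4)]
    and Y = arrangement_memberD[OF assms(2,5)]
  show "vs.subspace X1" "vs.subspace X2" "vs.subspace Y"
    using X1 X2 Y by simp_all
  show "X1 \<subseteq> vs.span (unit_vec ` {..n})" "X2 \<subseteq> vs.span (unit_vec ` {..n})"
    "Y \<subseteq> vs.span (unit_vec ` {..n})" "finite (unit_vec ` {..n})"
    using X1 X2 Y by (simp_all add: span_unit_vecs)
  have "n - 3 < vs.dim (Y \<inter> X1)" "n - 3 < vs.dim (Y \<inter> X2)"
    using assms(7,8) edge_codim2_iff_dim X1 X2 Y by simp_all
  moreover have "vs.dim (X1 \<inter> X2) = n - 3"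
    using dim_Int_nonadjacent assms(2-4,6) by blast
  ultimately show "vs.dim Y + vs.dim (X1 \<inter> X2) \<le> vs.dim (Y \<inter> X1) + vs.dim (Y \<inter> X2)"
    using assms(1) Y(3) by linarith
qed

lemma iso_Kab_image:
  assumes "iso_Kab A E a b" "inj_on f A"
    and "\<And>X Y. X \<in> A \<Longrightarrow> Y \<in> A \<Longrightarrow> X \<noteq> Y \<Longrightarrow> E' (f X) (f Y) \<longleftrightarrow> E X Y"
  shows "iso_Kab (f ` A) E' a b"
proof -
  obtain P Q where PQ: "P \<inter> Q = {}" "P \<union> Q = A" "finite P" "finite Q" "card P = a" "card Q = b"
    and adj: "\<forall>X\<in>A. \<forall>Y\<in>A. X \<noteq> Y \<longrightarrow> (E X Y \<longleftrightarrow> (X \<in> P \<and> Y \<in> Q) \<or> (X \<in> Q \<and> Y \<in> P))"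
    using assms(1) unfolding iso_Kab_def by blast
  have inj: "inj_on f P" "inj_on f Q"
    using assms(2) PQ(2) inj_on_subset by blast+
  have mem: "f X \<in> f ` S \<longleftrightarrow> X \<in> S" if "X \<in> A" "S \<subseteq> A" for X S
    using assms(2) that by (simp add: inj_on_image_mem_iff)
  show ?thesis
    unfolding iso_Kab_def
  proof (intro exI conjI ballI impI)
    show "f ` P \<inter> f ` Q = {}"
      using PQ(1,2) mem by blast
    show "f ` P \<union> f ` Q = f ` A" "finite (f ` P)" "finite (f ` Q)"
      using PQ(2-4) by auto
    show "card (f ` P) = a" "card (f ` Q) = b"
      using PQ(5,6) inj by (simp_all add: card_image)
    fix X' Y' assume "X' \<in> f ` A" "Y' \<in> f ` A" "X' \<noteq> Y'"
    then obtain X Y where XY: "X \<in> A" "Y \<in> A" "X \<noteq> Y" "X' = f X" "Y' = f Y"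
      by blast
    moreover have "P \<subseteq> A" "Q \<subseteq> A"
      using PQ(2) by blast+
    ultimately have "X' \<in> f ` P \<longleftrightarrow> X \<in> P" "X' \<in> f ` Q \<longleftrightarrow> X \<in> Q"
      "Y' \<in> f ` P \<longleftrightarrow> Y \<in> P" "Y' \<in> f ` Q \<longleftrightarrow> Y \<in> Q"
      using mem by simp_all
    then show "E' X' Y' \<longleftrightarrow> (X' \<in> f ` P \<and> Y' \<in> f ` Q) \<or> (X' \<in> f ` Q \<and> Y' \<in> f ` P)"
      using assms(3)[OF XY(1-3)] adj XY by simp
  qed
qed

lemma Int_same_part_subset_other_part:
  assumes "3 \<le> n" "arrangement (amb n) (n - 1) (P \<union> Q)" "P \<inter> Q = {}"
    and adj: "\<And>X Y. X \<in> P \<union> Q \<Longrightarrow> Y \<in> P \<union> Q \<Longrightarrow> X \<noteq> Y \<Longrightarrow>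
      edge_codim2 n X Y \<longleftrightarrow> (X \<in> P \<and> Y \<in> Q) \<or> (X \<in> Q \<and> Y \<in> P)"
    and "Y1 \<in> Q" "Y2 \<in> Q" "Y1 \<noteq> Y2" "X \<in> P"
  shows "Y1 \<inter> Y2 \<subseteq> X"
proof -
  have "X \<noteq> Y1" "X \<noteq> Y2"
    using assms(3,5,6,8) by blast+
  then have "\<not> edge_codim2 n Y1 Y2" "edge_codim2 n X Y1" "edge_codim2 n X Y2"
    using assms(3,5-8) adj[of Y1 Y2] adj[of X Y1] adj[of X Y2] by auto
  then show ?thesis
    using Int_subset_of_common_neighbour[OF assms(1,2)] assms(5,6,8) by blast
qed

lemma common_subspace_of_adjacent:
  assumes "arrangement (amb n) (n - 1) A" "X \<in> A" "Y \<in> A" "edge_codim2 n X Y"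
  obtains V where "vs.subspace V" "V \<subseteq> X \<inter> Y" "vs.dim V = n - 3"
proof -
  note X = arrangement_memberD[OF assms(1,2)] and Y = arrangement_memberD[OF assms(1,3)]
  have "vs.subspace (X \<inter> Y)"
    using vs.subspace_inter[OF X(2) Y(2)] .
  moreover have "X \<inter> Y \<subseteq> vs.span (unit_vec ` {..n})"
    using X(1) unfolding span_unit_vecs by blast
  moreover have "n - 3 \<le> vs.dim (X \<inter> Y)"
    using assms(4) edge_codim2_iff_dim[OF X(2) Y(2) X(1)] by simp
  ultimately show thesis
    using that by (rule vs.subspace_of_dim_exists[OF _ _ finite_imageI[OF finite_atMost]])
qed

lemma common_codim4_subspace:
  assumes "3 \<le> n" "arrangement (amb n) (n - 1) A" "iso_Kab A (edge_codim2 n) a b"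
    and "0 < a" "(a \<le> b \<and> b \<le> 2) \<or> (2 \<le> a \<and> a \<le> b)"
  obtains V where "vs.subspace V" "V \<subseteq> amb n" "vs.dim V = n - 3" "\<forall>X\<in>A. V \<subseteq> X"
proof -
  obtain P Q where PQ: "P \<inter> Q = {}" "P \<union> Q = A" "finite P" "finite Q" "card P = a" "card Q = b"
    and adj: "\<And>X Y. X \<in> P \<union> Q \<Longrightarrow> Y \<in> P \<union> Q \<Longrightarrow> X \<noteq> Y \<Longrightarrow>
      edge_codim2 n X Y \<longleftrightarrow> (X \<in> P \<and> Y \<in> Q) \<or> (X \<in> Q \<and> Y \<in> P)"
    using assms(3) unfolding iso_Kab_def by blast
  note arr = assms(2)[folded PQ(2)]
  have adj': "\<And>X Y. X \<in> Q \<union> P \<Longrightarrow> Y \<in> Q \<union> P \<Longrightarrow> X \<noteq> Y \<Longrightarrow>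
      edge_codim2 n X Y \<longleftrightarrow> (X \<in> Q \<and> Y \<in> P) \<or> (X \<in> P \<and> Y \<in> Q)"
    using adj by blast
  have two_members: "\<exists>X1\<in>S. \<exists>X2\<in>S. X1 \<noteq> X2" if "finite S" "2 \<le> card S" for S
    using that card_le_Suc0_iff_eq[of S] by auto
  consider "a = 1" "b = 1" | "2 \<le> b"
    using assms(4,5) by linarith
  then show thesis
  proof cases
    case 1
    then obtain X Y where "P = {X}" "Q = {Y}"
      using PQ(5,6) card_1_singletonE by metis
    then have XY: "X \<in> A" "Y \<in> A" "A = {X, Y}" "edge_codim2 n X Y"
      using PQ(1,2) adj[of X Y] by auto
    obtain V where "vs.subspace V" "V \<subseteq> X \<inter> Y" "vs.dim V = n - 3"
      using common_subspace_of_adjacent[OF assms(2) XY(1,2,4)] .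
    then show thesis
      using that arrangement_memberD(1)[OF assms(2) XY(1)] XY(3) by blast
  next
    case 2
    then obtain Y1 Y2 where Y12: "Y1 \<in> Q" "Y2 \<in> Q" "Y1 \<noteq> Y2"
      using two_members PQ(4,6) by blast
    have VP: "Y1 \<inter> Y2 \<subseteq> X" if "X \<in> P" for X
      using Int_same_part_subset_other_part[OF assms(1) arr PQ(1) adj Y12 that] .
    have VQ: "Y1 \<inter> Y2 \<subseteq> Y" if "Y \<in> Q" for Y
    proof (cases "2 \<le> a")
      case True
      then obtain X1 X2 where X12: "X1 \<in> P" "X2 \<in> P" "X1 \<noteq> X2"
        using two_members PQ(3,5) by blast
      have "X1 \<inter> X2 \<subseteq> Y"
        using Int_same_part_subset_other_part[of n Q P, OF assms(1) _ _ adj' X12 that] arr PQ(1)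
        by (simp add: Un_commute Int_commute)
      then show ?thesis
        using VP X12 by blast
    next
      case False
      then have "card {Y1, Y2} = card Q"
        using assms(4,5) 2 PQ(6) Y12(3) by simp
      then have "Q = {Y1, Y2}"
        using card_subset_eq[OF PQ(4)] Y12(1,2) by (metis empty_subsetI insert_subset)
      then show ?thesis
        using that by blast
    qed
    have "Y1 \<in> A" "Y2 \<in> A" "\<not> edge_codim2 n Y1 Y2"
      using Y12 PQ(1,2) adj[of Y1 Y2] by auto
    note Y1 = arrangement_memberD[OF assms(2) this(1)] and Y2 = arrangement_memberD[OF assms(2) this(2)]
    have "vs.subspace (Y1 \<inter> Y2)" "Y1 \<inter> Y2 \<subseteq> amb n" "vs.dim (Y1 \<inter> Y2) = n - 3"
      using vs.subspace_inter[OF Y1(2) Y2(2)] Y1(1) dim_Int_nonadjacent[OF assms(2) \<open>Y1 \<in> A\<close> \<open>Y2 \<in> A\<close>]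
        \<open>\<not> edge_codim2 n Y1 Y2\<close> by auto
    then show thesis
      using that VP VQ PQ(2) by blast
  qed
qed

lemma edge_lines_slice_iff:
  assumes "vs.subspace X" "vs.subspace Y" "vs.subspace L" "X \<subseteq> amb n"
    and "vs.dim ((X \<inter> Y) \<inter> L) + (n - 3) = vs.dim (X \<inter> Y)"
  shows "edge_lines (X \<inter> L) (Y \<inter> L) \<longleftrightarrow> edge_codim2 n X Y"
proof -
  have "(X \<inter> L) \<inter> (Y \<inter> L) = (X \<inter> Y) \<inter> L" "X \<inter> L \<subseteq> amb n"
    using assms(4) by blast+
  then show ?thesis
    using edge_lines_iff_dim[OF vs.subspace_inter[OF assms(1,3)] vs.subspace_inter[OF assms(2,3)]]
      edge_codim2_iff_dim[OF assms(1,2,4)] assms(5)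
    by auto
qed

lemma arrangement_slices:
  assumes "arrangement (amb n) d A" "vs.subspace L"
    and "\<And>X. X \<in> A \<Longrightarrow> vs.dim (X \<inter> L) = e"
    and "\<And>X. X \<in> A \<Longrightarrow> vs.span (V \<union> (X \<inter> L)) = X"
  shows "arrangement L e ((\<lambda>X. X \<inter> L) ` A)"
  unfolding arrangement_def
proof (intro conjI ballI impI)
  show "finite ((\<lambda>X. X \<inter> L) ` A)"
    using assms(1) unfolding arrangement_def by simp
  fix X' assume "X' \<in> (\<lambda>X. X \<inter> L) ` A"
  then obtain X where X: "X \<in> A" "X' = X \<inter> L"
    by blast
  note X_member = arrangement_memberD[OF assms(1) X(1)]
  have "X \<inter> L \<subseteq> amb n"
    using X_member(1) by blast
  then show "X' \<subseteq> L" "has_vdim X' e"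
    using assms(3)[OF X(1)] has_vdim_iff_dim[OF vs.subspace_inter[OF X_member(2) assms(2)]] X(2)
    by auto
  fix Y' assume "Y' \<in> (\<lambda>X. X \<inter> L) ` A" "X' \<noteq> Y'"
  then obtain Y where Y: "Y \<in> A" "Y' = Y \<inter> L" "X \<noteq> Y"
    using X by blast
  show "\<not> X' \<subseteq> Y'"
  proof
    assume "X' \<subseteq> Y'"
    then have "X \<subseteq> Y"
      using vs.span_mono[of "V \<union> X'" "V \<union> Y'"] assms(4)[OF X(1)] assms(4)[OF Y(1)] X(2) Y(2)
      by blast
    then show False
      using assms(1) X(1) Y(1,3) unfolding arrangement_def by blast
  qed
qed

lemma cone_over_line_arrangement:
  assumes "3 \<le> n" "arrangement (amb n) (n - 1) A" "iso_Kab A (edge_codim2 n) a b"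
    and V: "vs.subspace V" "V \<subseteq> amb n" "vs.dim V = n - 3" "\<forall>X\<in>A. V \<subseteq> X"
  shows "\<exists>\<Lambda> B. V \<subseteq> amb n \<and> has_vdim V (n - 3)
           \<and> \<Lambda> \<subseteq> amb n \<and> has_vdim \<Lambda> 4
           \<and> V \<inter> \<Lambda> = {\<lambda>i. 0}
           \<and> arrangement \<Lambda> 2 B
           \<and> iso_Kab B edge_lines a b
           \<and> A = {cspan (V \<union> l) | l. l \<in> B}"
proof -
  note member = arrangement_memberD[OF assms(2)]
  obtain L where L: "vs.subspace L" "L \<subseteq> amb n" "V \<inter> L = {0}" "vs.span (V \<union> L) = amb n"
    using vs.complement_subspace_exists[OF V(1) subspace_amb V(2)] .
  have dim_slice: "vs.dim (W \<inter> L) + (n - 3) = vs.dim W"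
    if "vs.subspace W" "V \<subseteq> W" "W \<subseteq> amb n" for W
    using vs.dim_Int_complement[OF V(1) L(1,3) that(1,2), where F = "unit_vec ` {..n}"] that(3)
    unfolding L(4) span_unit_vecs V(3) by simp
  have "vs.dim L = 4"
    using dim_slice[OF subspace_amb V(2) order_refl] L(2) assms(1) dim_amb
    by (simp add: Int_absorb1)
  have cone: "vs.span (V \<union> (X \<inter> L)) = X" if "X \<in> A" for X
    using vs.span_Un_Int_eq[OF V(1) L(1) member(2)[OF that]] V(4) member(1)[OF that] L(4) that
    by simp
  have slice_dim: "vs.dim (X \<inter> L) = 2" if "X \<in> A" for X
    using dim_slice[OF member(2)[OF that]] V(4) member(1,3)[OF that] that assms(1) by simp
  have "arrangement L 2 ((\<lambda>X. X \<inter> L) ` A)"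
    using arrangement_slices[OF assms(2) L(1) slice_dim cone] .
  moreover have "iso_Kab ((\<lambda>X. X \<inter> L) ` A) edge_lines a b"
  proof (rule iso_Kab_image[OF assms(3)])
    show "inj_on (\<lambda>X. X \<inter> L) A"
      by (rule inj_onI) (metis cone)
    fix X Y assume "X \<in> A" "Y \<in> A"
    then show "edge_lines (X \<inter> L) (Y \<inter> L) \<longleftrightarrow> edge_codim2 n X Y"
      using edge_lines_slice_iff[OF member(2) member(2) L(1) member(1)]
        dim_slice[OF vs.subspace_inter[OF member(2) member(2)]] V(4) member(1) by blast
  qed
  moreover have "A = {cspan (V \<union> l) | l. l \<in> (\<lambda>X. X \<inter> L) ` A}"
    using cone unfolding cspan_eq_span by force
  moreover have "has_vdim V (n - 3)" "has_vdim L 4"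
    using has_vdim_iff_dim V L(1,2) \<open>vs.dim L = 4\<close> by simp_all
  ultimately show ?thesis
    using V(2) L(2,3) by (auto simp: zero_fun_def)
qed

theorem lemma2p2:
  fixes n a b :: nat and A :: "(nat \<Rightarrow> complex) set set"
  assumes "n \<ge> 3"
    and "a > 0" and "b > 0"
    and "(a \<le> b \<and> b \<le> 2) \<or> (2 \<le> a \<and> a \<le> b)"
    and "arrangement (amb n) (n - 1) A"
    and "iso_Kab A (edge_codim2 n) a b"
  shows "\<exists>V \<Lambda> B. V \<subseteq> amb n \<and> has_vdim V (n - 3)
           \<and> \<Lambda> \<subseteq> amb n \<and> has_vdim \<Lambda> 4
           \<and> V \<inter> \<Lambda> = {\<lambda>i. 0}
           \<and> arrangement \<Lambda> 2 B
           \<and> iso_Kab B edge_lines a b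
           \<and> A = {cspan (V \<union> l) | l. l \<in> B}"
proof -
  obtain V where V: "vs.subspace V" "V \<subseteq> amb n" "vs.dim V = n - 3" "\<forall>X\<in>A. V \<subseteq> X"
    using common_codim4_subspace[OF assms(1,5,6,2,4)] .
  from cone_over_line_arrangement[OF assms(1,5,6) V] show ?thesis
    by (rule exI)
qed

end
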